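(* Let three circular arcs meet at a point $X$, forming angles of $2\pi/3$ with each other there, let $C_1,C_2,C_3$ be their centers of curvature and $r_i=|XC_i|$ their radii. Then the following are equivalent: (1) the sum of the three signed curvatures of the arcs at $X$ is zero; (2) the three points $C_1,C_2,C_3$ are collinear; (3) the three circles with centers $C_i$ and radii $r_i$ have two triple crossing points (two distinct points lying on all three circles).
   Context: Signed curvature: for a circular arc of curvature $c\ge 0$ ending at a point $X$, its signed curvature at $X$ is $c$ if the arc curves clockwise as it leaves $X$ and $-c$ if it curves counterclockwise. *)

theory Defs
  imports "HOL-Analysis.Analysis"
begin

text \<open>A circular arc ending at the point X of the plane (complex numbers) is described by
  its unit tangent direction t at X (pointing away from X along the arc), its curvature
  c > 0 and a flag cw saying whether the arc curves clockwise (True) or counterclockwise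
  (False) as it leaves X.\<close>

definition signed_curvature :: "real \<Rightarrow> bool \<Rightarrow> real" where
  "signed_curvature c cw = (if cw then c else - c)"

definition curvature_center :: "complex \<Rightarrow> complex \<Rightarrow> real \<Rightarrow> bool \<Rightarrow> complex" where
  "curvature_center X t c cw = X + (if cw then - \<i> else \<i>) * t / complex_of_real c"

end

theory Submission
  imports Defs
begin

text \<open>Write \<open>w \<times> z = Im (cnj w * z)\<close> for the planar cross product and \<open>k\<^sub>i\<close> for the
  signed curvatures, so that the centres are \<open>C\<^sub>i = X - \<i> t\<^sub>i / k\<^sub>i\<close>. Unit tangents at mutual
  angles \<open>2\<pi>/3\<close> sum to zero and satisfy \<open>t\<^sub>1 \<times> t\<^sub>2 = \<plusminus>\<surd>3/2\<close>; expanding the cross product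
  then shows that twice the signed area of the triangle \<open>C\<^sub>1C\<^sub>2C\<^sub>3\<close> is
  \<open>-(t\<^sub>1 \<times> t\<^sub>2)(k\<^sub>1 + k\<^sub>2 + k\<^sub>3)/(k\<^sub>1k\<^sub>2k\<^sub>3)\<close>.
  All three circles pass through \<open>X\<close>, which is off the line \<open>C\<^sub>1C\<^sub>2\<close>. If the centres are
  collinear, the reflection of \<open>X\<close> in their line is a second common point; conversely, centres of
  circles through two distinct points lie on the perpendicular bisector of these points.\<close>

lemma collinear_0_iff_Im_cnj_mult: "collinear {0, w, z :: complex} \<longleftrightarrow> Im (cnj w * z) = 0"
proof (cases "w = 0")
  case False
  then have "(Re w)\<^sup>2 + (Im w)\<^sup>2 \<noteq> 0"
    by (simp add: complex_eq_iff)
  then show ?thesis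
    by (auto simp: collinear_iff_Reals complex_is_Real_iff Im_divide mult.commute)
qed simp

lemma collinear_iff_Im_cnj_mult:
  "collinear {a, b, c :: complex} \<longleftrightarrow> Im (cnj (a - b) * (c - b)) = 0"
  by (simp add: collinear_3 collinear_0_iff_Im_cnj_mult)

lemma Im_cnj_mult_diff:
  "Im (cnj (a - b) * (c - b)) = Im (cnj a * c) - Im (cnj a * b) - Im (cnj b * c)"
  by (simp add: algebra_simps)

lemma Im_cnj_mult_rotated_scaled:
  "Im (cnj (\<i> * u / complex_of_real k) * (\<i> * v / complex_of_real l)) = Im (cnj u * v) / (k * l)"
  by (simp add: Im_divide_of_real Re_divide_of_real algebra_simps)

lemma Im_cnj_mult_squared:
  "(Im (cnj u * v))\<^sup>2 = (cmod u)\<^sup>2 * (cmod v)\<^sup>2 - (u \<bullet> v)\<^sup>2"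
proof -
  have "(cmod (cnj u * v))\<^sup>2 = (Re (cnj u * v))\<^sup>2 + (Im (cnj u * v))\<^sup>2"
    by (rule cmod_power2)
  moreover have "Re (cnj u * v) = u \<bullet> v"
    by (simp add: inner_complex_def)
  ultimately show ?thesis
    by (simp add: norm_mult power_mult_distrib)
qed

lemma unit_vectors_at_120_degrees_sum_zero:
  fixes u v w :: "'a::real_inner"
  assumes "norm u = 1" "norm v = 1" "norm w = 1"
    and "u \<bullet> v = -1/2" "v \<bullet> w = -1/2" "u \<bullet> w = -1/2"
  shows "u + v + w = 0"
proof -
  have "(norm (u + v + w))\<^sup>2 = (norm u)\<^sup>2 + (norm v)\<^sup>2 + (norm w)\<^sup>2
          + 2 * (u \<bullet> v) + 2 * (v \<bullet> w) + 2 * (u \<bullet> w)"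
    by (simp add: power2_norm_eq_inner inner_add inner_commute)
  also have "\<dots> = 0"
    using assms by simp
  finally show ?thesis
    by simp
qed

lemma collinear_equidistant_set:
  fixes p q :: "'a::euclidean_space"
  assumes "DIM('a) = 2" "p \<noteq> q"
  shows "collinear {z. dist z p = dist z q}"
proof -
  have "dist z p = dist z q \<longleftrightarrow> (q - p) \<bullet> z = (q \<bullet> q - p \<bullet> p) / 2" for z
  proof -
    have "dist z p = dist z q \<longleftrightarrow> (dist z p)\<^sup>2 = (dist z q)\<^sup>2"
      by simp
    then show ?thesis
      by (simp add: dist_norm power2_norm_eq_inner inner_diff inner_commute field_simps)
  qed
  then have "{z. dist z p = dist z q} = {z. (q - p) \<bullet> z = (q \<bullet> q - p \<bullet> p) / 2}"
    by blast
  then show ?thesis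
    using assms aff_dim_hyperplane[of "q - p" "(q \<bullet> q - p \<bullet> p) / 2"]
    by (simp add: collinear_aff_dim)
qed

lemma reflection_in_line:
  fixes a b x :: "'a::real_inner"
  assumes "x \<notin> affine hull {a, b}"
  obtains y where "y \<noteq> x" "\<And>z. z \<in> affine hull {a, b} \<Longrightarrow> dist z y = dist z x"
proof -
  define d where "d = b - a"
  define f where "f = a + ((x - a) \<bullet> d / (d \<bullet> d)) *\<^sub>R d"
  have f_hull: "f \<in> affine hull {a, b}"
    unfolding affine_hull_2_alt f_def d_def by blast
  have orth: "(z - f) \<bullet> (x - f) = 0" if z_hull: "z \<in> affine hull {a, b}" for z
  proof -
    obtain u where "z = a + u *\<^sub>R d"
      using z_hull by (auto simp: affine_hull_2_alt d_def)
    then have "z - f = (u - (x - a) \<bullet> d / (d \<bullet> d)) *\<^sub>R d"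
      unfolding f_def by (simp add: algebra_simps)
    moreover have "d \<bullet> (x - f) = 0"
      unfolding f_def by (cases "d = 0") (simp_all add: inner_diff_right inner_add_right inner_commute)
    ultimately show ?thesis
      by simp
  qed
  show thesis
  proof
    show "2 *\<^sub>R f - x \<noteq> x"
    proof
      assume "2 *\<^sub>R f - x = x"
      then have "(2::real) *\<^sub>R f = 2 *\<^sub>R x"
        by (metis diff_eq_eq scaleR_2)
      then show False
        using assms f_hull by simp
    qed
    show "dist z (2 *\<^sub>R f - x) = dist z x" if "z \<in> affine hull {a, b}" for z
    proof -
      have "z - (2 *\<^sub>R f - x) = (z - f) + (x - f)" "z - x = (z - f) - (x - f)"
        by (simp_all add: scaleR_2 algebra_simps)
      then have "(dist z (2 *\<^sub>R f - x))\<^sup>2 = (dist z x)\<^sup>2"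
        using orth[OF that]
        by (simp add: dist_norm power2_norm_eq_inner inner_add inner_diff inner_commute)
      then show ?thesis
        by simp
    qed
  qed
qed

lemma second_common_point_iff_collinear_centers:
  fixes A B C X :: complex
  assumes "\<not> collinear {A, X, B}"
  shows "collinear {A, B, C}
           \<longleftrightarrow> (\<exists>p q. p \<noteq> q \<and> p \<in> sphere A (dist X A) \<inter> sphere B (dist X B) \<inter> sphere C (dist X C)
                       \<and> q \<in> sphere A (dist X A) \<inter> sphere B (dist X B) \<inter> sphere C (dist X C))"
    (is "_ \<longleftrightarrow> (\<exists>p q. p \<noteq> q \<and> p \<in> ?S \<and> q \<in> ?S)")
proof
  assume "collinear {A, B, C}"
  moreover have "A \<noteq> B"
  proof
    assume "A = B"
    then have "{A, X, B} = {A, X}"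
      by auto
    then show False
      using assms by simp
  qed
  ultimately have C_hull: "C \<in> affine hull {A, B}"
    by (rule collinear_3_imp_in_affine_hull)
  have "X \<notin> affine hull {A, B}"
  proof
    assume "X \<in> affine hull {A, B}"
    then have "collinear {A, B, X}"
      by (rule affine_hull_3_imp_collinear)
    then show False
      using assms by (simp add: insert_commute)
  qed
  then obtain q where "q \<noteq> X" and q: "\<And>z. z \<in> affine hull {A, B} \<Longrightarrow> dist z q = dist z X"
    using reflection_in_line by blast
  have "X \<in> ?S"
    by (simp add: dist_commute)
  moreover have "q \<in> ?S"
    using q[OF C_hull] q[of A] q[of B] by (simp add: hull_inc dist_commute)
  ultimately show "\<exists>p q. p \<noteq> q \<and> p \<in> ?S \<and> q \<in> ?S"
    using \<open>q \<noteq> X\<close> by blast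
next
  assume "\<exists>p q. p \<noteq> q \<and> p \<in> ?S \<and> q \<in> ?S"
  then obtain p q where "p \<noteq> q" "p \<in> ?S" "q \<in> ?S"
    by blast
  have "collinear {z :: complex. dist z p = dist z q}"
    using \<open>p \<noteq> q\<close> by (simp add: collinear_equidistant_set)
  moreover have "{A, B, C} \<subseteq> {z. dist z p = dist z q}"
    using \<open>p \<in> ?S\<close> \<open>q \<in> ?S\<close> by simp
  ultimately show "collinear {A, B, C}"
    by (rule collinear_subset)
qed

lemma curvature_center_eq:
  "curvature_center X t c cw = X - \<i> * t / complex_of_real (signed_curvature c cw)"
  by (simp add: curvature_center_def signed_curvature_def)

lemma signed_curvature_eq_0_iff [simp]: "signed_curvature c cw = 0 \<longleftrightarrow> c = 0"
  by (simp add: signed_curvature_def)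

lemma collinear_curvature_centers_and_point_iff:
  assumes "k1 \<noteq> 0" "k2 \<noteq> 0"
  shows "collinear {X - \<i> * t1 / complex_of_real k1, X, X - \<i> * t2 / complex_of_real k2}
           \<longleftrightarrow> Im (cnj t1 * t2) = 0"
  using assms by (auto simp: collinear_iff_Im_cnj_mult Im_cnj_mult_rotated_scaled mult.commute)

lemma collinear_curvature_centers_iff:
  assumes "t1 + t2 + t3 = 0" "Im (cnj t1 * t2) \<noteq> 0" "k1 \<noteq> 0" "k2 \<noteq> 0" "k3 \<noteq> 0"
  shows "collinear {X - \<i> * t1 / complex_of_real k1, X - \<i> * t2 / complex_of_real k2,
                    X - \<i> * t3 / complex_of_real k3}
           \<longleftrightarrow> k1 + k2 + k3 = 0"
proof -
  have t3: "t3 = - t1 - t2"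
    using assms(1) by (simp add: algebra_simps eq_neg_iff_add_eq_0)
  define u1 u2 u3 where "u1 = \<i> * t1 / k1" and "u2 = \<i> * t2 / k2" and "u3 = \<i> * t3 / k3"
  have "Im (cnj ((X - u1) - (X - u2)) * ((X - u3) - (X - u2))) = Im (cnj (u1 - u2) * (u3 - u2))"
    by (simp add: algebra_simps)
  also have "\<dots> = Im (cnj t1 * t3) / (k1 * k3) - Im (cnj t1 * t2) / (k1 * k2)
                    - Im (cnj t2 * t3) / (k2 * k3)"
    unfolding Im_cnj_mult_diff u1_def u2_def u3_def Im_cnj_mult_rotated_scaled ..
  also have "\<dots> = - Im (cnj t1 * t2) * (k1 + k2 + k3) / (k1 * k2 * k3)"
    using assms(3-5) unfolding t3 by (simp add: field_simps)
  finally show ?thesis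
    using assms(2-5) by (simp add: collinear_iff_Im_cnj_mult u1_def u2_def u3_def)
qed

theorem lemma2:
  fixes X t1 t2 t3 :: complex and c1 c2 c3 :: real and cw1 cw2 cw3 :: bool
  assumes unit: "norm t1 = 1" "norm t2 = 1" "norm t3 = 1"
    and angles: "t1 \<bullet> t2 = cos (2 * pi / 3)" "t2 \<bullet> t3 = cos (2 * pi / 3)"
                "t1 \<bullet> t3 = cos (2 * pi / 3)"
    and pos: "c1 > 0" "c2 > 0" "c3 > 0"
  defines "C1 \<equiv> curvature_center X t1 c1 cw1"
      and "C2 \<equiv> curvature_center X t2 c2 cw2"
      and "C3 \<equiv> curvature_center X t3 c3 cw3"
  defines "r1 \<equiv> dist X C1" and "r2 \<equiv> dist X C2" and "r3 \<equiv> dist X C3"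
  shows "(signed_curvature c1 cw1 + signed_curvature c2 cw2 + signed_curvature c3 cw3 = 0
            \<longleftrightarrow> collinear {C1, C2, C3})
       \<and> (collinear {C1, C2, C3}
            \<longleftrightarrow> (\<exists>p q. p \<noteq> q \<and> p \<in> sphere C1 r1 \<inter> sphere C2 r2 \<inter> sphere C3 r3
                        \<and> q \<in> sphere C1 r1 \<inter> sphere C2 r2 \<inter> sphere C3 r3))"
proof -
  define k1 where "k1 = signed_curvature c1 cw1"
  define k2 where "k2 = signed_curvature c2 cw2"
  define k3 where "k3 = signed_curvature c3 cw3"
  have k_nonzero: "k1 \<noteq> 0" "k2 \<noteq> 0" "k3 \<noteq> 0"
    using pos by (simp_all add: k1_def k2_def k3_def)
  have centers: "C1 = X - \<i> * t1 / complex_of_real k1" "C2 = X - \<i> * t2 / complex_of_real k2"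
      "C3 = X - \<i> * t3 / complex_of_real k3"
    by (simp_all add: C1_def C2_def C3_def k1_def k2_def k3_def curvature_center_eq)
  have sum_zero: "t1 + t2 + t3 = 0"
    by (rule unit_vectors_at_120_degrees_sum_zero) (use unit angles in \<open>simp_all add: cos_120\<close>)
  have "(Im (cnj t1 * t2))\<^sup>2 = 3 / 4"
    using Im_cnj_mult_squared[of t1 t2] unit(1,2) angles(1) by (simp add: cos_120 power2_eq_square)
  then have cross: "Im (cnj t1 * t2) \<noteq> 0"
    by auto
  have curvatures: "collinear {C1, C2, C3} \<longleftrightarrow> k1 + k2 + k3 = 0"
    unfolding centers by (rule collinear_curvature_centers_iff[OF sum_zero cross k_nonzero])
  have "\<not> collinear {C1, X, C2}"
    unfolding centers collinear_curvature_centers_and_point_iff[OF k_nonzero(1,2)] by (rule cross)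
  then have circles: "collinear {C1, C2, C3}
            \<longleftrightarrow> (\<exists>p q. p \<noteq> q \<and> p \<in> sphere C1 r1 \<inter> sphere C2 r2 \<inter> sphere C3 r3
                        \<and> q \<in> sphere C1 r1 \<inter> sphere C2 r2 \<inter> sphere C3 r3)"
    unfolding r1_def r2_def r3_def by (rule second_common_point_iff_collinear_centers)
  show ?thesis
    using curvatures circles unfolding k1_def k2_def k3_def by blast
qed

end
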